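(* Let $4\le k\le\infty$ and let $\Gamma$ be a graph whose maximal cliques (with respect to inclusion) pairwise intersect in at most a vertex. Let $V$ and $M$ be the sets of vertices and of maximal cliques of $\Gamma$, and let $\Gamma^*$ be the graph with vertex set $V\cup M$ in which: $v,v'\in V$ are adjacent iff they are adjacent in $\Gamma$; $m,m'\in M$ are adjacent iff $m\cap m'\neq\emptyset$; and $v\in V$, $m\in M$ are adjacent iff $v\in m$. Then the flag complex spanned on $\Gamma^*$ is $k$-large if and only if the flag complex spanned on $\Gamma$ is $k$-large.
   Context: The flag complex spanned on a graph has a simplex for each finite clique. A cycle is a subcomplex that is a subdivision of the circle; it is full if every simplex spanned by its vertices lies in it. A flag complex is $k$-large if it has no full cycle of length $<k$. *)

theory Defs
  imports Main "HOL-Library.Extended_Nat"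
begin

definition graph :: "'a set \<Rightarrow> ('a \<Rightarrow> 'a \<Rightarrow> bool) \<Rightarrow> bool" where
  "graph V E \<longleftrightarrow> (\<forall>x y. E x y \<longrightarrow> x \<in> V \<and> y \<in> V \<and> E y x \<and> x \<noteq> y)"

definition clique :: "'a set \<Rightarrow> ('a \<Rightarrow> 'a \<Rightarrow> bool) \<Rightarrow> 'a set \<Rightarrow> bool" where
  "clique V E C \<longleftrightarrow> C \<subseteq> V \<and> (\<forall>x\<in>C. \<forall>y\<in>C. x \<noteq> y \<longrightarrow> E x y)"

definition maximal_clique :: "'a set \<Rightarrow> ('a \<Rightarrow> 'a \<Rightarrow> bool) \<Rightarrow> 'a set \<Rightarrow> bool" where
  "maximal_clique V E C \<longleftrightarrow> clique V E C \<and> (\<forall>D. clique V E D \<and> C \<subseteq> D \<longrightarrow> D = C)"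

definition flag_complex :: "'a set \<Rightarrow> ('a \<Rightarrow> 'a \<Rightarrow> bool) \<Rightarrow> 'a set set" where
  "flag_complex V E = {\<sigma>. \<sigma> \<noteq> {} \<and> finite \<sigma> \<and> clique V E \<sigma>}"

definition is_cycle :: "'a set \<Rightarrow> ('a \<Rightarrow> 'a \<Rightarrow> bool) \<Rightarrow> 'a list \<Rightarrow> bool" where
  "is_cycle V E vs \<longleftrightarrow> length vs \<ge> 3 \<and> distinct vs \<and> set vs \<subseteq> V \<and>
     (\<forall>i < length vs. E (vs ! i) (vs ! ((i + 1) mod length vs)))"

definition cycle_subcomplex :: "'a list \<Rightarrow> 'a set set" where
  "cycle_subcomplex vs =
     {{vs ! i} | i. i < length vs} \<union> {{vs ! i, vs ! ((i + 1) mod length vs)} | i. i < length vs}"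

definition full_cycle :: "'a set \<Rightarrow> ('a \<Rightarrow> 'a \<Rightarrow> bool) \<Rightarrow> 'a list \<Rightarrow> bool" where
  "full_cycle V E vs \<longleftrightarrow> is_cycle V E vs \<and>
     (\<forall>\<sigma> \<in> flag_complex V E. \<sigma> \<subseteq> set vs \<longrightarrow> \<sigma> \<in> cycle_subcomplex vs)"

definition k_large :: "enat \<Rightarrow> 'a set \<Rightarrow> ('a \<Rightarrow> 'a \<Rightarrow> bool) \<Rightarrow> bool" where
  "k_large k V E \<longleftrightarrow> \<not> (\<exists>vs. full_cycle V E vs \<and> enat (length vs) < k)"

definition star_vertices :: "'a set \<Rightarrow> ('a \<Rightarrow> 'a \<Rightarrow> bool) \<Rightarrow> ('a + 'a set) set" where
  "star_vertices V E = Inl ` V \<union> Inr ` {m. maximal_clique V E m}"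

fun star_adj :: "'a set \<Rightarrow> ('a \<Rightarrow> 'a \<Rightarrow> bool) \<Rightarrow> ('a + 'a set) \<Rightarrow> ('a + 'a set) \<Rightarrow> bool" where
  "star_adj V E (Inl v) (Inl v') = E v v'"
| "star_adj V E (Inr m) (Inr m') =
     (maximal_clique V E m \<and> maximal_clique V E m' \<and> m \<noteq> m' \<and> m \<inter> m' \<noteq> {})"
| "star_adj V E (Inl v) (Inr m) = (v \<in> V \<and> maximal_clique V E m \<and> v \<in> m)"
| "star_adj V E (Inr m) (Inl v) = (v \<in> V \<and> maximal_clique V E m \<and> v \<in> m)"

end

(*
  The graph \<Gamma> is the induced subgraph of \<Gamma>* on the vertices Inl v, so an induced cycle of \<Gamma>
  (full cycles are exactly the induced cycles of length at least 4) is one of \<Gamma>*.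

  Conversely, take an induced cycle of \<Gamma>* and a clique m on it that follows a vertex u of \<Gamma>.
  The next vertex is a clique m' as well (it would otherwise be adjacent to u), and the common
  vertex x of m and m' can be put in place of m, or of both m and m' if the vertex after m' lies in
  \<Gamma>. A cycle consisting only of cliques is replaced at once by the cycle of the common vertices
  of consecutive cliques. Because two maximal cliques share at most one vertex, the new cycle has
  no chords between vertices at distance two; it is not longer and contains fewer cliques. Such a
  cycle contains an induced cycle that is not longer, obtained by shortcutting a chord of minimal
  span, so induction on the number of cliques yields an induced cycle of \<Gamma> that is not longer.
*)

theory Submission
  imports Defs "HOL-Number_Theory.Cong"
begin

lemma graph_irrefl: "graph V E \<Longrightarrow> \<not> E x x"
  unfolding graph_def by blast

lemma graph_sym: "graph V E \<Longrightarrow> E x y \<Longrightarrow> E y x"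
  unfolding graph_def by blast

lemma graph_in_V: "graph V E \<Longrightarrow> E x y \<Longrightarrow> x \<in> V \<and> y \<in> V"
  unfolding graph_def by blast

lemma clique_adj: "clique V E \<sigma> \<Longrightarrow> x \<in> \<sigma> \<Longrightarrow> y \<in> \<sigma> \<Longrightarrow> x \<noteq> y \<Longrightarrow> E x y"
  unfolding clique_def by blast

lemma clique_doubleton:
  assumes "graph V E" "E x y"
  shows "clique V E {x, y}"
  unfolding clique_def using assms(2) graph_in_V[OF assms] graph_sym[OF assms] by auto

section \<open>Cycles as periodic sequences\<close>

text \<open>A cycle of length \<open>l\<close> is an \<open>l\<close>-periodic sequence of vertices, so that positions along the
  cycle can be added without reducing modulo \<open>l\<close>.\<close>

definition cycle_seq :: "'v set \<Rightarrow> ('v \<Rightarrow> 'v \<Rightarrow> bool) \<Rightarrow> (nat \<Rightarrow> 'v) \<Rightarrow> nat \<Rightarrow> bool" where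
  "cycle_seq V E f l \<longleftrightarrow> 3 \<le> l \<and> (\<forall>i. f (i + l) = f i) \<and> inj_on f {..<l} \<and> range f \<subseteq> V \<and>
     (\<forall>i. E (f i) (f (Suc i)))"

lemma cycle_seqD:
  assumes "cycle_seq V E f l"
  shows cycle_seq_length: "3 \<le> l" and cycle_seq_periodic: "f (i + l) = f i"
    and cycle_seq_inj_on: "inj_on f {..<l}" and cycle_seq_in_V: "f i \<in> V"
    and cycle_seq_edge: "E (f i) (f (Suc i))"
  using assms unfolding cycle_seq_def by auto

lemma cycle_seq_add_mult: "cycle_seq V E f l \<Longrightarrow> f (i + k * l) = f i"
  by (induction k) (simp_all, metis add.assoc add.commute cycle_seq_periodic)

lemma cycle_seq_mod: "cycle_seq V E f l \<Longrightarrow> f (i mod l) = f i"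
  using cycle_seq_add_mult[of V E f l "i mod l" "i div l"] by simp

lemma cycle_seq_eq_iff:
  assumes "cycle_seq V E f l"
  shows "f i = f j \<longleftrightarrow> [i = j] (mod l)"
proof -
  have "0 < l" using cycle_seq_length[OF assms] by simp
  then have "f (i mod l) = f (j mod l) \<longleftrightarrow> i mod l = j mod l"
    using inj_onD[OF cycle_seq_inj_on[OF assms]] by auto
  then show ?thesis by (simp add: cycle_seq_mod[OF assms] cong_def)
qed

lemma cycle_seq_shift_eq_iff: "cycle_seq V E f l \<Longrightarrow> f (k + i) = f (k + j) \<longleftrightarrow> f i = f j"
  by (simp add: cycle_seq_eq_iff cong_add_lcancel_nat)

lemma cycle_seq_Suc_eq: "cycle_seq V E f l \<Longrightarrow> f i = f j \<Longrightarrow> f (Suc i) = f (Suc j)"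
  using cycle_seq_shift_eq_iff[of V E f l 1 i j] by simp

lemma cycle_seq_add_neq:
  assumes c: "cycle_seq V E f l" and d: "0 < d" "d < l"
  shows "f (k + d) \<noteq> f k"
  using cycle_seq_shift_eq_iff[OF c, of k d 0] cycle_seq_eq_iff[OF c, of d 0] d
  by (simp add: cong_def)

lemma cycle_seq_consecutive_distinct:
  assumes c: "cycle_seq V E f l"
  shows "f (Suc k) \<noteq> f k" "f (k + 2) \<noteq> f k" "f (k + 2) \<noteq> f (Suc k)"
  using cycle_seq_add_neq[OF c, of 1 k] cycle_seq_add_neq[OF c, of 2 k]
    cycle_seq_add_neq[OF c, of 1 "Suc k"] cycle_seq_length[OF c] by auto

lemma cycle_seq_Suc_mod: "cycle_seq V E f l \<Longrightarrow> f (Suc (i mod l)) = f (Suc i)"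
  by (simp add: cycle_seq_eq_iff cong_def mod_Suc_eq)

lemma cycle_seq_range: "cycle_seq V E f l \<Longrightarrow> range f = f ` {..<l}"
  using cycle_seq_mod[of V E f l] cycle_seq_length[of V E f l]
  by (auto simp: image_iff) (metis mod_less_divisor lessThan_iff zero_less_numeral less_le_trans)

lemma finite_range_cycle_seq: "cycle_seq V E f l \<Longrightarrow> finite (range f)"
  by (simp add: cycle_seq_range)

lemma cycle_seq_modI:
  assumes "3 \<le> L" "inj_on h {..<L}" "h ` {..<L} \<subseteq> V" "\<And>a. a < L \<Longrightarrow> E (h a) (h (Suc a mod L))"
  shows "cycle_seq V E (\<lambda>k. h (k mod L)) L"
  unfolding cycle_seq_def
proof (intro conjI allI)
  show "inj_on (\<lambda>k. h (k mod L)) {..<L}" using assms(2) by (simp add: inj_on_def)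
  show "range (\<lambda>k. h (k mod L)) \<subseteq> V" using assms(1,3) by auto
  fix i
  show "E (h (i mod L)) (h (Suc i mod L))"
    using assms(1) assms(4)[of "i mod L"] by (simp add: mod_Suc_eq)
qed (use assms in simp_all)

lemma cycle_seq_exists_change:
  assumes c: "cycle_seq V E f l" and "P (f p)" "\<not> P (f q)"
  shows "\<exists>i. P (f (Suc i)) \<and> \<not> P (f (i + 2))"
proof (rule ccontr)
  assume "\<not> ?thesis"
  then have step: "P (f (Suc i)) \<Longrightarrow> P (f (Suc (Suc i)))" for i by auto
  have l: "3 \<le> l" by (rule cycle_seq_length[OF c])
  have after_p: "P (f (p + l + n))" for n
  proof (induction n)
    case 0
    then show ?case using assms(2) cycle_seq_periodic[OF c, of p] by simp
  next
    case (Suc n)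
    then show ?case using step[of "p + l + n - 1"] l by simp
  qed
  have "p \<le> p * l" using l by simp
  then have index: "p + l + (q + p * l - p) = q + Suc p * l" by (simp only: mult_Suc)
  have "P (f (q + Suc p * l))" using after_p[of "q + p * l - p"] unfolding index .
  then show False using assms(3) cycle_seq_add_mult[OF c] by metis
qed

definition induced_cycle_seq :: "'v set \<Rightarrow> ('v \<Rightarrow> 'v \<Rightarrow> bool) \<Rightarrow> (nat \<Rightarrow> 'v) \<Rightarrow> nat \<Rightarrow> bool" where
  "induced_cycle_seq V E f l \<longleftrightarrow> cycle_seq V E f l \<and> 4 \<le> l \<and>
     (\<forall>i j. E (f i) (f j) \<longrightarrow> f j = f (Suc i) \<or> f i = f (Suc j))"

definition locally_induced_cycle_seq :: "'v set \<Rightarrow> ('v \<Rightarrow> 'v \<Rightarrow> bool) \<Rightarrow> (nat \<Rightarrow> 'v) \<Rightarrow> nat \<Rightarrow> bool" where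
  "locally_induced_cycle_seq V E f l \<longleftrightarrow> cycle_seq V E f l \<and> (\<forall>i. \<not> E (f i) (f (i + 2)))"

lemma induced_cycle_seqD:
  assumes "induced_cycle_seq V E f l"
  shows induced_cycle_seq_cycle_seq: "cycle_seq V E f l" and induced_cycle_seq_length: "4 \<le> l"
    and induced_cycle_seq_adj: "E (f i) (f j) \<Longrightarrow> f j = f (Suc i) \<or> f i = f (Suc j)"
  using assms unfolding induced_cycle_seq_def by auto

lemma locally_induced_cycle_seqD:
  assumes "locally_induced_cycle_seq V E f l"
  shows locally_induced_cycle_seq_cycle_seq: "cycle_seq V E f l"
    and locally_induced_cycle_seq_nonadj: "\<not> E (f i) (f (i + 2))"
  using assms unfolding locally_induced_cycle_seq_def by auto

lemma induced_cycle_seq_nonadj: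
  assumes f: "induced_cycle_seq V E f l" and d: "2 \<le> d" "d + 2 \<le> l"
  shows "\<not> E (f a) (f (a + d))"
proof
  have c: "cycle_seq V E f l" by (rule induced_cycle_seq_cycle_seq[OF f])
  assume "E (f a) (f (a + d))"
  then have "f (a + d) = f (Suc a) \<or> f a = f (Suc (a + d))"
    using induced_cycle_seq_adj[OF f] by blast
  then show False
    using cycle_seq_add_neq[OF c, of "d - 1" "Suc a"] cycle_seq_add_neq[OF c, of "Suc d" a] d
    by auto
qed

lemma induced_imp_locally_induced_cycle_seq:
  assumes "induced_cycle_seq V E f l"
  shows "locally_induced_cycle_seq V E f l"
  unfolding locally_induced_cycle_seq_def
  using induced_cycle_seq_cycle_seq[OF assms] induced_cycle_seq_nonadj[OF assms, of 2]
    induced_cycle_seq_length[OF assms] by simp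

lemma induced_cycle_seq_no_common_neighbour_of_edge:
  assumes g: "graph V E" and f: "induced_cycle_seq V E f l"
    and adj: "E (f i) (f k)" "E (f (Suc i)) (f k)"
  shows False
proof -
  have c: "cycle_seq V E f l" by (rule induced_cycle_seq_cycle_seq[OF f])
  have "f k \<noteq> f (Suc i)" using adj(2) graph_irrefl[OF g] by metis
  then have i_after_k: "f i = f (Suc k)" using induced_cycle_seq_adj[OF f adj(1)] by blast
  have "f (Suc i) \<noteq> f (Suc k)"
    using adj(1) graph_irrefl[OF g] cycle_seq_shift_eq_iff[OF c, of 1 i k] by auto
  then have "f k = f (i + 2)" using induced_cycle_seq_adj[OF f adj(2)] by simp
  then have "f (Suc k) = f (i + 3)"
    using cycle_seq_shift_eq_iff[OF c, of 1 k "i + 2"] by (simp add: numeral_3_eq_3)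
  then show False
    using i_after_k cycle_seq_add_neq[OF c, of 3 i] induced_cycle_seq_length[OF f] by simp
qed

lemma induced_cycle_seq_triangle_free:
  assumes g: "graph V E" and f: "induced_cycle_seq V E f l"
    and adj: "E (f i) (f j)" "E (f i) (f k)" "E (f j) (f k)"
  shows False
  using induced_cycle_seq_adj[OF f adj(1)]
  by (metis adj(2,3) induced_cycle_seq_no_common_neighbour_of_edge[OF g f])

lemma cycle_seq_induced_if_no_long_chord:
  assumes g: "graph V E" and c: "cycle_seq V E f l" and l: "4 \<le> l"
    and no_chord: "\<And>a d. 2 \<le> d \<Longrightarrow> d + 2 \<le> l \<Longrightarrow> \<not> E (f a) (f (a + d))"
  shows "induced_cycle_seq V E f l"
proof -
  have ordered: "f b = f (Suc a) \<or> f a = f (Suc b)" if ab: "a < b" "b < l" "E (f a) (f b)" for a b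
  proof -
    consider "b = Suc a" | "b + 1 = a + l" | "2 \<le> b - a" "b - a + 2 \<le> l"
      using ab by (cases "b - a = 1"; cases "b - a = l - 1") auto
    then show ?thesis
    proof cases
      case 2
      then show ?thesis using cycle_seq_periodic[OF c, of a] by simp
    next
      case 3
      then show ?thesis using no_chord[of "b - a" a] that by simp
    qed simp
  qed
  have "f j = f (Suc i) \<or> f i = f (Suc j)" if adj: "E (f i) (f j)" for i j
  proof -
    have "0 < l" using l by simp
    then have "i mod l < l" "j mod l < l" by simp_all
    moreover have "i mod l \<noteq> j mod l"
      using adj graph_irrefl[OF g] cycle_seq_mod[OF c] by metis
    ultimately show ?thesis
      using ordered[of "i mod l" "j mod l"] ordered[of "j mod l" "i mod l"] adj graph_sym[OF g]
      by (auto simp: cycle_seq_mod[OF c] cycle_seq_Suc_mod[OF c] linorder_neq_iff)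
  qed
  then show ?thesis unfolding induced_cycle_seq_def using c l by blast
qed

lemma cycle_seq_shortcut:
  assumes c: "cycle_seq V E f l" and d: "2 \<le> d" "d < l" and chord: "E (f (i + d)) (f i)"
  shows "cycle_seq V E (\<lambda>k. f (i + k mod (d + 1))) (d + 1)"
proof (rule cycle_seq_modI)
  show "inj_on (\<lambda>a. f (i + a)) {..<d + 1}"
  proof (rule inj_onI)
    fix a b assume "a \<in> {..<d + 1}" "b \<in> {..<d + 1}" "f (i + a) = f (i + b)"
    then show "a = b"
      using d inj_onD[OF cycle_seq_inj_on[OF c], of a b] cycle_seq_shift_eq_iff[OF c] by simp
  qed
  show "E (f (i + a)) (f (i + Suc a mod (d + 1)))" if "a < d + 1" for a
    using that chord cycle_seq_edge[OF c, of "i + a"] by (cases "a = d") auto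
qed (use d cycle_seq_in_V[OF c] in auto)

lemma cycle_seq_shortcut_no_long_chord:
  assumes g: "graph V E" and c: "cycle_seq V E f l"
    and minimal: "\<And>e a. 2 \<le> e \<Longrightarrow> e < d \<Longrightarrow> \<not> E (f a) (f (a + e))"
    and e: "2 \<le> e" "e + 2 \<le> d + 1"
  shows "\<not> E (f (i + a mod (d + 1))) (f (i + (a + e) mod (d + 1)))"
proof
  define p where "p = a mod (d + 1)"
  have p: "p \<le> d" and ae: "(a + e) mod (d + 1) = (p + e) mod (d + 1)"
    unfolding p_def by (simp_all add: mod_add_left_eq)
  assume adj: "E (f (i + a mod (d + 1))) (f (i + (a + e) mod (d + 1)))"
  show False
  proof (cases "p + e \<le> d")
    case True
    then show False
      using adj minimal[of e "i + p"] e unfolding ae p_def[symmetric] by (simp add: add.assoc)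
  next
    case False
    define q where "q = p + e - (d + 1)"
    have "(p + e) mod (d + 1) = q" "p = q + (d + 1 - e)"
      using False p e unfolding q_def by (simp_all add: le_mod_geq)
    then have "E (f (i + q)) (f (i + q + (d + 1 - e)))"
      using adj graph_sym[OF g] unfolding ae p_def[symmetric] by (simp add: add.assoc)
    moreover have "2 \<le> d + 1 - e" "d + 1 - e < d" using e by auto
    ultimately show False using minimal by blast
  qed
qed

lemma locally_induced_cycle_seq_contains_induced:
  assumes g: "graph V E" and f: "locally_induced_cycle_seq V E f l"
  shows "\<exists>h l'. induced_cycle_seq V E h l' \<and> l' \<le> l \<and> range h \<subseteq> range f"
proof -
  have c: "cycle_seq V E f l" by (rule locally_induced_cycle_seq_cycle_seq[OF f])
  note no2 = locally_induced_cycle_seq_nonadj[OF f]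
  let ?chord = "\<lambda>d. 2 \<le> d \<and> d + 2 \<le> l \<and> (\<exists>a. E (f a) (f (a + d)))"
  show ?thesis
  proof (cases "\<exists>d. ?chord d")
    case False
    have "4 \<le> l"
    proof (rule ccontr)
      assume "\<not> 4 \<le> l"
      then have "l = 3" using cycle_seq_length[OF c] by simp
      then have "f 3 = f 0" using cycle_seq_periodic[OF c, of 0] by simp
      then show False
        using cycle_seq_edge[OF c, of 2] no2[of 0] graph_sym[OF g] by (simp add: eval_nat_numeral)
    qed
    then have "induced_cycle_seq V E f l"
      using cycle_seq_induced_if_no_long_chord[OF g c] False by blast
    then show ?thesis by blast
  next
    case True
    txt \<open>Shortcut the cycle along a chord of minimal span.\<close>
    then obtain d where chord: "?chord d" and minimal: "\<And>e. e < d \<Longrightarrow> \<not> ?chord e"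
      using exists_least_iff[of ?chord] by blast
    then obtain a where adj: "E (f a) (f (a + d))" by blast
    have "d \<noteq> 2" using adj no2 by blast
    then have d: "3 \<le> d" "d < l" using chord by auto
    let ?h = "\<lambda>k. f (a + k mod (d + 1))"
    have "cycle_seq V E ?h (d + 1)"
      using cycle_seq_shortcut[OF c _ d(2)] d(1) graph_sym[OF g adj] by simp
    moreover have "\<not> E (?h b) (?h (b + e))" if "2 \<le> e" "e + 2 \<le> d + 1" for b e
      using cycle_seq_shortcut_no_long_chord[OF g c _ that] minimal chord by force
    ultimately have "induced_cycle_seq V E ?h (d + 1)"
      using cycle_seq_induced_if_no_long_chord[OF g] d by simp
    moreover have "d + 1 \<le> l" "range ?h \<subseteq> range f" using chord by auto
    ultimately show ?thesis by blast
  qed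
qed

lemma locally_induced_cycle_seq_modI:
  assumes "cycle_seq V E (\<lambda>k. h (k mod L)) L" and "\<And>a. a < L \<Longrightarrow> \<not> E (h a) (h ((a + 2) mod L))"
  shows "locally_induced_cycle_seq V E (\<lambda>k. h (k mod L)) L"
proof -
  have "\<not> E (h (i mod L)) (h ((i + 2) mod L))" for i
  proof -
    have "(i + 2) mod L = (i mod L + 2) mod L" by (simp only: mod_add_left_eq)
    then show ?thesis using cycle_seq_length[OF assms(1)] assms(2)[of "i mod L"] by simp
  qed
  then show ?thesis unfolding locally_induced_cycle_seq_def using assms(1) by blast
qed

text \<open>The segment \<open>f (i + 2), \<dots>, f (i + r + 1)\<close> of the cycle is replaced by the single new
  vertex \<open>y\<close>, at which the new cycle starts.\<close>

lemma cycle_seq_replace_segment: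
  assumes c: "cycle_seq V E f l" and r: "1 \<le> r" "r + 3 \<le> l"
    and y: "y \<in> V" "y \<notin> range f" and adj: "E (f (Suc i)) y" "E y (f (i + r + 2))"
    and h: "\<And>a. h a = (if a = 0 then y else f (i + r + 1 + a))"
  shows "cycle_seq V E (\<lambda>k. h (k mod (l + 1 - r))) (l + 1 - r)"
proof (rule cycle_seq_modI)
  let ?L = "l + 1 - r"
  show "inj_on h {..<?L}"
    using y(2) inj_onD[OF cycle_seq_inj_on[OF c]] cycle_seq_shift_eq_iff[OF c, of "i + r + 1"] r
    unfolding h by (intro inj_onI) (auto split: if_splits)
  show "h ` {..<?L} \<subseteq> V" using y(1) cycle_seq_in_V[OF c] unfolding h by auto
  fix a assume "a < ?L"
  then consider "a = 0" | "0 < a" "Suc a < ?L" | "Suc a = ?L" by linarith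
  then show "E (h a) (h (Suc a mod ?L))"
  proof cases
    case 1
    moreover have "Suc 0 mod ?L = 1" using r by simp
    ultimately show ?thesis using adj(2) by (simp add: h)
  next
    case 2 then show ?thesis using cycle_seq_edge[OF c, of "i + r + 1 + a"] by (simp add: h)
  next
    case 3
    then have wrap: "i + r + 1 + a = Suc i + l" and "0 < a" using r by simp_all
    then have "h a = f (i + r + 1 + a)" by (simp add: h)
    also have "\<dots> = f (Suc i)" unfolding wrap by (rule cycle_seq_periodic[OF c])
    finally have "h a = f (Suc i)" .
    moreover have "Suc a mod ?L = 0" using 3 by simp
    ultimately show ?thesis using adj(1) by (simp add: h)
  qed
qed (use r in simp)

lemma locally_induced_cycle_seq_replace_segment:
  assumes f: "locally_induced_cycle_seq V E f l" and r: "1 \<le> r" "r + 3 \<le> l"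
    and y: "y \<in> V" "y \<notin> range f"
    and adj: "E (f (Suc i)) y" "E y (f (i + r + 2))"
    and nonadj: "\<not> E (f i) y" "\<not> E y (f (i + r + 3))" "\<not> E (f (Suc i)) (f (i + r + 2))"
  shows "\<exists>g. locally_induced_cycle_seq V E g (l + 1 - r) \<and>
    range g \<subseteq> insert y (range f - {f (i + 2)})"
proof -
  have c: "cycle_seq V E f l" by (rule locally_induced_cycle_seq_cycle_seq[OF f])
  define L where "L = l + 1 - r"
  define h where "h a = (if a = 0 then y else f (i + r + 1 + a))" for a
  have L: "4 \<le> L" using r unfolding L_def by simp
  have wrap: "h (L - 2) = f i" "h (L - 1) = f (Suc i)" "h 1 = f (i + r + 2)" "h 2 = f (i + r + 3)"
    using r cycle_seq_periodic[OF c, of i] cycle_seq_periodic[OF c, of "Suc i"]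
    unfolding h_def L_def by (simp_all add: add.commute add.left_commute eval_nat_numeral)
  have "locally_induced_cycle_seq V E (\<lambda>k. h (k mod L)) L"
  proof (rule locally_induced_cycle_seq_modI)
    show "cycle_seq V E (\<lambda>k. h (k mod L)) L"
      unfolding L_def by (rule cycle_seq_replace_segment[OF c r y adj h_def])
    fix a assume "a < L"
    then consider "a = 0" | "0 < a" "a + 2 < L" | "a + 2 = L" | "a + 1 = L" by linarith
    then show "\<not> E (h a) (h ((a + 2) mod L))"
    proof cases
      case 1 then show ?thesis using nonadj(2) wrap L by (simp add: h_def)
    next
      case 2 then show ?thesis
        using locally_induced_cycle_seq_nonadj[OF f, of "i + r + 1 + a"] unfolding h_def by simp
    next
      case 3
      then have "h a = f i" "(a + 2) mod L = 0" using wrap(1) by auto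
      then show ?thesis using nonadj(1) by (simp add: h_def)
    next
      case 4
      then have "h a = f (Suc i)" "(a + 2) mod L = 1" using wrap(2) L by (auto simp: mod_Suc)
      then show ?thesis using nonadj(3) wrap by simp
    qed
  qed
  moreover have "h a \<noteq> f (i + 2)" if "0 < a" "a < L" for a
    using cycle_seq_add_neq[OF c, of "r - 1 + a" "i + 2"] that r unfolding h_def L_def
    by (simp add: add.assoc)
  then have "range (\<lambda>k. h (k mod L)) \<subseteq> insert y (range f - {f (i + 2)})"
    using r unfolding h_def L_def by auto
  ultimately show ?thesis unfolding L_def by blast
qed

lemma cycle_seq_comp_iff:
  assumes inj: "inj \<phi>" and V: "\<And>x. \<phi> x \<in> V' \<longleftrightarrow> x \<in> V" and E: "\<And>x y. E' (\<phi> x) (\<phi> y) \<longleftrightarrow> E x y"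
  shows "cycle_seq V' E' (\<phi> \<circ> f) l \<longleftrightarrow> cycle_seq V E f l"
  unfolding cycle_seq_def by (simp add: inj_eq[OF inj] inj_on_def image_subset_iff V E)

lemma induced_cycle_seq_comp_iff:
  assumes inj: "inj \<phi>" and V: "\<And>x. \<phi> x \<in> V' \<longleftrightarrow> x \<in> V" and E: "\<And>x y. E' (\<phi> x) (\<phi> y) \<longleftrightarrow> E x y"
  shows "induced_cycle_seq V' E' (\<phi> \<circ> f) l \<longleftrightarrow> induced_cycle_seq V E f l"
  unfolding induced_cycle_seq_def cycle_seq_comp_iff[of \<phi> V' V E' E, OF assms]
  by (simp add: inj_eq[OF inj] E)

lemma locally_induced_cycle_seq_comp_iff:
  assumes inj: "inj \<phi>" and V: "\<And>x. \<phi> x \<in> V' \<longleftrightarrow> x \<in> V" and E: "\<And>x y. E' (\<phi> x) (\<phi> y) \<longleftrightarrow> E x y"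
  shows "locally_induced_cycle_seq V' E' (\<phi> \<circ> f) l \<longleftrightarrow> locally_induced_cycle_seq V E f l"
  unfolding locally_induced_cycle_seq_def cycle_seq_comp_iff[of \<phi> V' V E' E, OF assms]
  by (simp add: E)

section \<open>Full cycles\<close>

lemma is_cycle_iff_cycle_seq:
  "is_cycle V E vs \<longleftrightarrow> cycle_seq V E (\<lambda>i. vs ! (i mod length vs)) (length vs)"
proof (cases "3 \<le> length vs")
  case True
  let ?n = "length vs"
  have n: "0 < ?n" using True by linarith
  have "inj_on (\<lambda>i. vs ! (i mod ?n)) {..<?n} \<longleftrightarrow> distinct vs"
    by (auto simp: distinct_conv_nth inj_on_def)
  moreover have "range (\<lambda>i. vs ! (i mod ?n)) = set vs"
  proof
    show "set vs \<subseteq> range (\<lambda>i. vs ! (i mod ?n))"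
      by (auto simp: in_set_conv_nth) (metis mod_less rangeI)
  qed (use n in auto)
  moreover have "(\<forall>i. E (vs ! (i mod ?n)) (vs ! (Suc i mod ?n))) \<longleftrightarrow>
      (\<forall>i < ?n. E (vs ! i) (vs ! ((i + 1) mod ?n)))"
  proof
    assume edges: "\<forall>i < ?n. E (vs ! i) (vs ! ((i + 1) mod ?n))"
    show "\<forall>i. E (vs ! (i mod ?n)) (vs ! (Suc i mod ?n))"
    proof
      fix i
      have "E (vs ! (i mod ?n)) (vs ! (Suc (i mod ?n) mod ?n))" using edges n by simp
      then show "E (vs ! (i mod ?n)) (vs ! (Suc i mod ?n))" by (simp add: mod_Suc_eq)
    qed
  next
    assume edges: "\<forall>i. E (vs ! (i mod ?n)) (vs ! (Suc i mod ?n))"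
    show "\<forall>i < ?n. E (vs ! i) (vs ! ((i + 1) mod ?n))"
      using edges by (metis Suc_eq_plus1 mod_less)
  qed
  ultimately show ?thesis unfolding is_cycle_def cycle_seq_def using True by simp
qed (simp add: is_cycle_def cycle_seq_def)

lemma cycle_seq_map_upt_nth: "cycle_seq V E f l \<Longrightarrow> map f [0..<l] ! (i mod l) = f i"
  using cycle_seq_length cycle_seq_mod by fastforce

lemma cycle_subcomplex_map_upt:
  assumes c: "cycle_seq V E f l"
  shows "cycle_subcomplex (map f [0..<l]) = {{f i} | i. i < l} \<union> {{f i, f (Suc i)} | i. i < l}"
proof -
  have nth: "map f [0..<l] ! i = f i" "map f [0..<l] ! ((i + 1) mod l) = f (Suc i)" if "i < l" for i
    using that cycle_seq_map_upt_nth[OF c, of "Suc i"] by simp_all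
  have "{{map f [0..<l] ! i} | i. i < length (map f [0..<l])} = {{f i} | i. i < l}"
    by (rule Collect_cong) (use nth in force)
  moreover have "{{map f [0..<l] ! i, map f [0..<l] ! ((i + 1) mod length (map f [0..<l]))} | i.
      i < length (map f [0..<l])} = {{f i, f (Suc i)} | i. i < l}"
    by (rule Collect_cong) (use nth in force)
  ultimately show ?thesis unfolding cycle_subcomplex_def by simp
qed

lemma is_cycle_map_upt: "cycle_seq V E f l \<Longrightarrow> is_cycle V E (map f [0..<l])"
  using is_cycle_iff_cycle_seq[of V E "map f [0..<l]"] cycle_seq_map_upt_nth[of V E f l] by simp

lemma full_cycle_map_upt_clique:
  assumes c: "cycle_seq V E f l" and full: "full_cycle V E (map f [0..<l])"
    and \<sigma>: "clique V E \<sigma>" "\<sigma> \<noteq> {}" "finite \<sigma>" "\<sigma> \<subseteq> range f"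
  shows "\<exists>p. \<sigma> = {f p} \<or> \<sigma> = {f p, f (Suc p)}"
proof -
  have "\<sigma> \<in> flag_complex V E" "\<sigma> \<subseteq> set (map f [0..<l])"
    using \<sigma> cycle_seq_range[OF c] by (simp_all add: flag_complex_def atLeast0LessThan)
  then have "\<sigma> \<in> cycle_subcomplex (map f [0..<l])" using full unfolding full_cycle_def by blast
  then show ?thesis unfolding cycle_subcomplex_map_upt[OF c] by blast
qed

lemma full_cycle_imp_induced_cycle_seq:
  assumes g: "graph V E" and c: "cycle_seq V E f l" and full: "full_cycle V E (map f [0..<l])"
  shows "induced_cycle_seq V E f l"
proof -
  note in_cycle = full_cycle_map_upt_clique[OF c full]
  have "4 \<le> l"
  proof (rule ccontr)
    assume "\<not> 4 \<le> l"
    then have l: "l = 3" using cycle_seq_length[OF c] by simp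
    have edges: "E (f 0) (f 1)" "E (f 1) (f 2)" "E (f 2) (f 0)"
      using cycle_seq_edge[OF c, of 0] cycle_seq_edge[OF c, of 1] cycle_seq_edge[OF c, of 2]
        cycle_seq_periodic[OF c, of 0] l by (simp_all add: numeral_eq_Suc)
    have "clique V E {f 0, f 1, f 2}"
      using edges graph_sym[OF g] cycle_seq_in_V[OF c] unfolding clique_def by auto
    moreover have "{f 0, f 1, f 2} \<subseteq> range f" by auto
    ultimately obtain p where "{f 0, f 1, f 2} = {f p} \<or> {f 0, f 1, f 2} = {f p, f (Suc p)}"
      using in_cycle[of "{f 0, f 1, f 2}"] by auto
    then have "card {f 0, f 1, f 2} \<le> 2"
      by (elim disjE) (simp_all only: card_insert_if finite.intros, simp_all)
    moreover have "f 1 \<noteq> f 0" "f 2 \<noteq> f 0" "f 2 \<noteq> f 1"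
      using cycle_seq_add_neq[OF c, of 1 0] cycle_seq_add_neq[OF c, of 2 0]
        cycle_seq_add_neq[OF c, of 1 1] l
      by (simp_all add: numeral_2_eq_2)
    ultimately show False by simp
  qed
  moreover have "f j = f (Suc i) \<or> f i = f (Suc j)" if adj: "E (f i) (f j)" for i j
  proof -
    have ne: "f i \<noteq> f j" using adj graph_irrefl[OF g] by metis
    obtain p where "{f i, f j} = {f p} \<or> {f i, f j} = {f p, f (Suc p)}"
      using in_cycle[OF clique_doubleton[OF g adj]] by auto
    then have "(f i = f p \<and> f j = f (Suc p)) \<or> (f i = f (Suc p) \<and> f j = f p)"
      using ne by (auto simp: doubleton_eq_iff)
    then show ?thesis using cycle_seq_Suc_eq[OF c, of i p] cycle_seq_Suc_eq[OF c, of j p] by auto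
  qed
  ultimately show ?thesis unfolding induced_cycle_seq_def using c by blast
qed

lemma induced_cycle_seq_imp_full_cycle:
  assumes g: "graph V E" and f: "induced_cycle_seq V E f l"
  shows "full_cycle V E (map f [0..<l])"
proof -
  have c: "cycle_seq V E f l" by (rule induced_cycle_seq_cycle_seq[OF f])
  have "\<sigma> \<in> {{f i} | i. i < l} \<union> {{f i, f (Suc i)} | i. i < l}"
    if \<sigma>: "clique V E \<sigma>" "\<sigma> \<noteq> {}" "\<sigma> \<subseteq> f ` {..<l}" for \<sigma>
  proof -
    obtain a where a: "a < l" "f a \<in> \<sigma>" using \<sigma>(2,3) by blast
    show ?thesis
    proof (cases "\<sigma> = {f a}")
      case False
      then obtain z where "z \<in> \<sigma>" "z \<noteq> f a" using a(2) by blast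
      then obtain b where b: "b < l" "f b \<in> \<sigma>" "f a \<noteq> f b" using \<sigma>(3) by force
      have adj: "E (f a) (f b)" by (rule clique_adj[OF \<sigma>(1) a(2) b(2,3)])
      have "w \<in> {f a, f b}" if w: "w \<in> \<sigma>" for w
      proof (rule ccontr)
        assume "w \<notin> {f a, f b}"
        then have "E (f a) w" "E (f b) w" using clique_adj[OF \<sigma>(1)] a(2) b(2) w by auto
        moreover obtain k where "w = f k" using w \<sigma>(3) by blast
        ultimately show False using induced_cycle_seq_triangle_free[OF g f adj] by blast
      qed
      then have \<sigma>_eq: "\<sigma> = {f a, f b}" using a(2) b(2) by blast
      from induced_cycle_seq_adj[OF f adj] have "\<sigma> = {f a, f (Suc a)} \<or> \<sigma> = {f b, f (Suc b)}"
        unfolding \<sigma>_eq by auto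
      then show ?thesis using a(1) b(1) by blast
    qed (use a in blast)
  qed
  then have "\<sigma> \<in> cycle_subcomplex (map f [0..<l])"
    if "\<sigma> \<in> flag_complex V E" "\<sigma> \<subseteq> set (map f [0..<l])" for \<sigma>
    using that unfolding cycle_subcomplex_map_upt[OF c] flag_complex_def
    by (simp add: atLeast0LessThan)
  then show ?thesis using is_cycle_map_upt[OF c] unfolding full_cycle_def by blast
qed

lemma k_large_iff_no_short_induced_cycle_seq:
  assumes g: "graph V E"
  shows "k_large k V E \<longleftrightarrow> \<not> (\<exists>f l. induced_cycle_seq V E f l \<and> enat l < k)"
proof -
  have from_full: "induced_cycle_seq V E (\<lambda>i. vs ! (i mod length vs)) (length vs)"
    if full: "full_cycle V E vs" for vs
  proof -
    have c: "cycle_seq V E (\<lambda>i. vs ! (i mod length vs)) (length vs)"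
      using full is_cycle_iff_cycle_seq[THEN iffD1] unfolding full_cycle_def by blast
    have "map (\<lambda>i. vs ! (i mod length vs)) [0..<length vs] = map ((!) vs) [0..<length vs]"
      by (rule map_cong) simp_all
    then have vs: "map (\<lambda>i. vs ! (i mod length vs)) [0..<length vs] = vs" by (simp add: map_nth)
    show ?thesis using full_cycle_imp_induced_cycle_seq[OF g c] full unfolding vs by blast
  qed
  have to_full: "full_cycle V E (map f [0..<l]) \<and> length (map f [0..<l]) = l"
    if "induced_cycle_seq V E f l" for f l
    using induced_cycle_seq_imp_full_cycle[OF g that] by simp
  show ?thesis
    unfolding k_large_def
  proof
    assume no_full: "\<not> (\<exists>vs. full_cycle V E vs \<and> enat (length vs) < k)"
    show "\<not> (\<exists>f l. induced_cycle_seq V E f l \<and> enat l < k)"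
    proof
      assume "\<exists>f l. induced_cycle_seq V E f l \<and> enat l < k"
      then obtain f l where "induced_cycle_seq V E f l" "enat l < k" by blast
      then show False using no_full to_full by fastforce
    qed
  next
    assume "\<not> (\<exists>f l. induced_cycle_seq V E f l \<and> enat l < k)"
    then show "\<not> (\<exists>vs. full_cycle V E vs \<and> enat (length vs) < k)" using from_full by blast
  qed
qed

section \<open>Maximal cliques\<close>

lemma clique_subset_maximal_clique:
  assumes "clique V E S"
  shows "\<exists>m. maximal_clique V E m \<and> S \<subseteq> m"
proof -
  let ?A = "{D. clique V E D \<and> S \<subseteq> D}"
  have "\<exists>M\<in>?A. \<forall>X\<in>?A. M \<subseteq> X \<longrightarrow> X = M"
  proof (rule subset_Zorn_nonempty)
    fix C assume ne: "C \<noteq> {}" and chain: "subset.chain ?A C"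
    have sub: "\<And>X. X \<in> C \<Longrightarrow> clique V E X \<and> S \<subseteq> X"
      and lin: "\<And>X Y. X \<in> C \<Longrightarrow> Y \<in> C \<Longrightarrow> X \<subseteq> Y \<or> Y \<subseteq> X"
      using chain unfolding subset_chain_def by auto
    have "E x y" if xy: "x \<in> \<Union>C" "y \<in> \<Union>C" "x \<noteq> y" for x y
    proof -
      obtain X Y where XY: "X \<in> C" "Y \<in> C" "x \<in> X" "y \<in> Y" using xy(1,2) by blast
      consider "X \<subseteq> Y" | "Y \<subseteq> X" using lin[OF XY(1,2)] by blast
      then show ?thesis
      proof cases
        case 1 then show ?thesis using clique_adj[of V E Y x y] sub[OF XY(2)] XY xy(3) by blast
      next
        case 2 then show ?thesis using clique_adj[of V E X x y] sub[OF XY(1)] XY xy(3) by blast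
      qed
    qed
    moreover have "\<Union>C \<subseteq> V" using sub unfolding clique_def by blast
    ultimately have "clique V E (\<Union>C)" unfolding clique_def by blast
    moreover obtain X where "X \<in> C" using ne by blast
    then have "S \<subseteq> \<Union>C" using sub by blast
    ultimately show "\<Union>C \<in> ?A" by blast
  qed (use assms in blast)
  then obtain M where M: "M \<in> ?A" and max: "\<forall>X\<in>?A. M \<subseteq> X \<longrightarrow> X = M" ..
  have "maximal_clique V E M"
    unfolding maximal_clique_def
  proof (intro conjI allI impI)
    show "clique V E M" using M by simp
    fix D assume D: "clique V E D \<and> M \<subseteq> D"
    then have "D \<in> ?A" using M by auto
    then show "D = M" using max D by blast
  qed
  then show ?thesis using M by blast
qed

lemma maximal_clique_adj: "maximal_clique V E m \<Longrightarrow> a \<in> m \<Longrightarrow> b \<in> m \<Longrightarrow> a \<noteq> b \<Longrightarrow> E a b"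
  unfolding maximal_clique_def by (blast intro: clique_adj)

lemma maximal_clique_subset: "maximal_clique V E m \<Longrightarrow> m \<subseteq> V"
  unfolding maximal_clique_def clique_def by blast

definition maximal_cliques_meet_in_vertex :: "'a set \<Rightarrow> ('a \<Rightarrow> 'a \<Rightarrow> bool) \<Rightarrow> bool" where
  "maximal_cliques_meet_in_vertex V E \<longleftrightarrow>
     (\<forall>m m'. maximal_clique V E m \<and> maximal_clique V E m' \<and> m \<noteq> m' \<longrightarrow>
        (\<forall>x y. x \<in> m \<inter> m' \<and> y \<in> m \<inter> m' \<longrightarrow> x = y))"

lemma common_neighbour_in_maximal_clique:
  assumes g: "graph V E" and meet: "maximal_cliques_meet_in_vertex V E"
    and m: "maximal_clique V E m" and ab: "a \<in> m" "b \<in> m" "a \<noteq> b"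
    and adj: "E a c" "E b c"
  shows "c \<in> m"
proof -
  have "clique V E {a, b, c}"
    using maximal_clique_adj[OF m ab] adj graph_in_V[OF g] graph_sym[OF g]
    unfolding clique_def by auto
  then obtain m' where m': "maximal_clique V E m'" "{a, b, c} \<subseteq> m'"
    using clique_subset_maximal_clique by blast
  then have "m' = m" using meet m ab unfolding maximal_cliques_meet_in_vertex_def by blast
  then show ?thesis using m' by blast
qed

section \<open>Induced cycles in the graph of vertices and maximal cliques\<close>

lemma graph_star: "graph V E \<Longrightarrow> graph (star_vertices V E) (star_adj V E)"
  unfolding graph_def
proof (intro allI impI)
  fix x y assume "\<forall>x y. E x y \<longrightarrow> x \<in> V \<and> y \<in> V \<and> E y x \<and> x \<noteq> y" "star_adj V E x y"
  then show "x \<in> star_vertices V E \<and> y \<in> star_vertices V E \<and> star_adj V E y x \<and> x \<noteq> y"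
    by (cases x; cases y) (auto simp: star_vertices_def)
qed

lemma Inl_in_star_vertices [simp]: "Inl x \<in> star_vertices V E \<longleftrightarrow> x \<in> V"
  by (auto simp: star_vertices_def)

lemma Inr_in_star_vertices [simp]: "Inr m \<in> star_vertices V E \<longleftrightarrow> maximal_clique V E m"
  by (auto simp: star_vertices_def)

lemmas induced_cycle_seq_Inl_iff =
  induced_cycle_seq_comp_iff[of Inl "star_vertices V E" V "star_adj V E" E, simplified]
  for V E

lemmas locally_induced_cycle_seq_Inl_iff =
  locally_induced_cycle_seq_comp_iff[of Inl "star_vertices V E" V "star_adj V E" E, simplified]
  for V E

lemma star_adj_clique_if_adj_member:
  assumes g: "graph V E" and meet: "maximal_cliques_meet_in_vertex V E"
    and m: "maximal_clique V E m" and x: "x \<in> m"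
    and adj: "star_adj V E c (Inl x)" and c: "c \<noteq> Inr m"
    and vertex_case: "\<And>y. c = Inl y \<Longrightarrow> \<exists>u\<in>m. u \<noteq> x \<and> E y u"
  shows "star_adj V E c (Inr m)"
proof (cases c)
  case (Inl y)
  then obtain u where "u \<in> m" "u \<noteq> x" "E y u" using vertex_case by blast
  then have "y \<in> m"
    using common_neighbour_in_maximal_clique[OF g meet m x] adj Inl graph_sym[OF g] by auto
  then show ?thesis using Inl m maximal_clique_subset[OF m] by auto
next
  case (Inr m')
  then show ?thesis using adj c m x by auto
qed

lemma star_induced_cycle_seq_clique_after_vertex:
  assumes f: "induced_cycle_seq (star_vertices V E) (star_adj V E) f l"
    and u: "f (Suc i) = Inl u" and m: "f (i + 2) = Inr m"
  shows "f (i + 3) \<in> range Inr"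
proof (rule ccontr)
  have c: "cycle_seq (star_vertices V E) (star_adj V E) f l"
    by (rule induced_cycle_seq_cycle_seq[OF f])
  assume "f (i + 3) \<notin> range Inr"
  then obtain w where w: "f (Suc i + 2) = Inl w" by (cases "f (i + 3)") (auto simp: numeral_eq_Suc)
  have mc: "maximal_clique V E m" and "u \<in> m" "w \<in> m"
    using cycle_seq_edge[OF c, of "Suc i"] cycle_seq_edge[OF c, of "i + 2"] u m w
    by (simp_all add: numeral_eq_Suc)
  moreover have "u \<noteq> w"
    using cycle_seq_add_neq[OF c, of 2 "Suc i"] induced_cycle_seq_length[OF f] u w by auto
  ultimately have "star_adj V E (f (Suc i)) (f (Suc i + 2))"
    using u w maximal_clique_adj[OF mc] by simp
  then show False using induced_cycle_seq_nonadj[OF f, of 2] induced_cycle_seq_length[OF f] by simp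
qed

lemma star_induced_cycle_seq_adj_if_common_point:
  assumes c: "cycle_seq (star_vertices V E) (star_adj V E) f l"
    and "f p = Inr m" "f q = Inr m'" "f p \<noteq> f q" "x \<in> m" "x \<in> m'"
  shows "star_adj V E (f p) (f q)"
  using assms cycle_seq_in_V[OF c, of p] cycle_seq_in_V[OF c, of q] by auto

lemma star_induced_cycle_seq_no_point_in_three_cliques:
  assumes g: "graph V E" and f: "induced_cycle_seq (star_vertices V E) (star_adj V E) f l"
    and cliques: "f p = Inr m\<^sub>p" "f q = Inr m\<^sub>q" "f r = Inr m\<^sub>r"
    and x: "x \<in> m\<^sub>p" "x \<in> m\<^sub>q" "x \<in> m\<^sub>r"
    and distinct: "f p \<noteq> f q" "f p \<noteq> f r" "f q \<noteq> f r"
  shows False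
proof -
  note adj = star_induced_cycle_seq_adj_if_common_point[OF induced_cycle_seq_cycle_seq[OF f]]
  show False
    using induced_cycle_seq_triangle_free[OF graph_star[OF g] f
        adj[OF cliques(1,2) distinct(1) x(1,2)] adj[OF cliques(1,3) distinct(2) x(1,3)]
        adj[OF cliques(2,3) distinct(3) x(2,3)]] .
qed

lemma star_induced_cycle_seq_point_not_on_cycle:
  assumes g: "graph V E" and f: "induced_cycle_seq (star_vertices V E) (star_adj V E) f l"
    and m: "f j = Inr m" "f (Suc j) = Inr m'" and x: "x \<in> m" "x \<in> m'"
  shows "Inl x \<notin> range f"
proof
  have c: "cycle_seq (star_vertices V E) (star_adj V E) f l"
    by (rule induced_cycle_seq_cycle_seq[OF f])
  assume "Inl x \<in> range f"
  then obtain k where k: "f k = Inl x" by (metis rangeE)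
  have "star_adj V E (f j) (f k)" "star_adj V E (f (Suc j)) (f k)"
    using cycle_seq_in_V[OF c, of j] cycle_seq_in_V[OF c, of "Suc j"] cycle_seq_in_V[OF c, of k]
      m k x by auto
  then show False
    using induced_cycle_seq_no_common_neighbour_of_edge[OF graph_star[OF g] f] by blast
qed

lemma star_induced_cycle_seq_nonadj_point:
  assumes g: "graph V E" and meet: "maximal_cliques_meet_in_vertex V E"
    and f: "induced_cycle_seq (star_vertices V E) (star_adj V E) f l"
    and m: "f j = Inr m" "x \<in> m" and x: "Inl x \<notin> range f"
    and nonadj: "f k \<noteq> f j" "\<not> star_adj V E (f k) (f j)"
    and vertex_case: "\<And>y. f k = Inl y \<Longrightarrow> \<exists>z. Inl z \<in> range f \<and> z \<in> m \<and> E y z"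
  shows "\<not> star_adj V E (f k) (Inl x)"
proof
  have mc: "maximal_clique V E m"
    using cycle_seq_in_V[OF induced_cycle_seq_cycle_seq[OF f], of j] m by simp
  assume "star_adj V E (f k) (Inl x)"
  then have "star_adj V E (f k) (Inr m)"
    using star_adj_clique_if_adj_member[OF g meet mc m(2)] nonadj(1) m(1) vertex_case x by fastforce
  then show False using nonadj(2) m(1) by simp
qed

lemma star_induced_cycle_seq_clique_points_distinct:
  assumes g: "graph V E" and f: "induced_cycle_seq (star_vertices V E) (star_adj V E) f l"
    and cliques: "\<And>k. f k = Inr (M k)" and x: "\<And>k. x k \<in> M k" "\<And>k. x k \<in> M (Suc k)"
    and d: "0 < d" "d < l"
  shows "x (k + d) \<noteq> x k"
proof
  have c: "cycle_seq (star_vertices V E) (star_adj V E) f l"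
    by (rule induced_cycle_seq_cycle_seq[OF f])
  have l: "4 \<le> l" by (rule induced_cycle_seq_length[OF f])
  note no_three = star_induced_cycle_seq_no_point_in_three_cliques[OF g f cliques cliques cliques]
  assume eq: "x (k + d) = x k"
  show False
  proof (cases "d = 1")
    case True
    then show False
      using no_three[of "x k" k "Suc k" "k + 2"] x[of k] x[of "Suc k"] eq
        cycle_seq_consecutive_distinct[OF c, of k] by auto
  next
    case False
    have "f (Suc k) \<noteq> f k" "f (k + d) \<noteq> f k" "f (Suc k + (d - 1)) \<noteq> f (Suc k)"
      using cycle_seq_add_neq[OF c, of 1 k] cycle_seq_add_neq[OF c, of d k]
        cycle_seq_add_neq[OF c, of "d - 1" "Suc k"] d l False by auto
    then show False
      using no_three[of "x k" k "Suc k" "k + d"] x[of k] x[of "k + d"] eq d False by auto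
  qed
qed

lemma star_induced_cycle_seq_of_cliques:
  assumes g: "graph V E" and meet: "maximal_cliques_meet_in_vertex V E"
    and f: "induced_cycle_seq (star_vertices V E) (star_adj V E) f l"
    and cliques: "\<And>k. f k = Inr (M k)"
  shows "\<exists>h. locally_induced_cycle_seq V E h l"
proof -
  have c: "cycle_seq (star_vertices V E) (star_adj V E) f l"
    by (rule induced_cycle_seq_cycle_seq[OF f])
  have l: "4 \<le> l" by (rule induced_cycle_seq_length[OF f])
  have mc: "maximal_clique V E (M k)" for k using cycle_seq_in_V[OF c, of k] cliques by simp
  have M_periodic: "M (k + l) = M k" for k using cycle_seq_periodic[OF c, of k] cliques by simp
  have "\<exists>z. z \<in> M k \<inter> M (Suc k)" for k using cycle_seq_edge[OF c, of k] cliques by auto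
  define x where "x k = (SOME z. z \<in> M k \<inter> M (Suc k))" for k
  have x: "x k \<in> M k" "x k \<in> M (Suc k)" for k
    using someI_ex[OF \<open>\<exists>z. z \<in> M k \<inter> M (Suc k)\<close>] unfolding x_def by blast+
  note distinct = star_induced_cycle_seq_clique_points_distinct[OF g f cliques x]
  have step: "x k \<noteq> x (Suc k)" for k using distinct[of 1 k] l by simp
  have "locally_induced_cycle_seq V E x l"
    unfolding locally_induced_cycle_seq_def cycle_seq_def
  proof (intro conjI allI)
    show "x (i + l) = x i" for i
      unfolding x_def using M_periodic[of i] M_periodic[of "Suc i"] by simp
    show "inj_on x {..<l}"
    proof (rule inj_onI)
      fix a b assume ab: "a \<in> {..<l}" "b \<in> {..<l}" "x a = x b"
      have "x (a + (b - a)) \<noteq> x a" if "a < b"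
        using distinct[of "b - a" a] that ab by (simp add: less_imp_diff_less)
      moreover have "x (b + (a - b)) \<noteq> x b" if "b < a"
        using distinct[of "a - b" b] that ab by (simp add: less_imp_diff_less)
      ultimately show "a = b" using ab(3) by (cases a b rule: linorder_cases) auto
    qed
    show "range x \<subseteq> V" using x(1) mc maximal_clique_subset by blast
    show "E (x i) (x (Suc i))" for i using maximal_clique_adj[OF mc x(2) x(1) step] .
    show "\<not> E (x i) (x (i + 2))" for i
    proof
      assume adj: "E (x i) (x (i + 2))"
      have "x (Suc i) \<in> M (i + 2)" "x (Suc i) \<noteq> x (i + 2)"
        using x(2)[of "Suc i"] step[of "Suc i"] by simp_all
      moreover have "E (x (Suc i)) (x i)"
        using graph_sym[OF g] maximal_clique_adj[OF mc x(2) x(1) step] by blast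
      ultimately have "x i \<in> M (i + 2)"
        using common_neighbour_in_maximal_clique[OF g meet mc _ x(1)] graph_sym[OF g adj] by blast
      then show False
        using star_induced_cycle_seq_no_point_in_three_cliques[OF g f cliques cliques cliques,
            of "x i" i "Suc i" "i + 2"] x[of i] cycle_seq_consecutive_distinct[OF c, of i] by auto
    qed
  qed (use l in simp)
  then show ?thesis by blast
qed

text \<open>The vertex \<open>x\<close> takes the place of \<open>m\<close> if the
  next vertex on the cycle is a clique again, and of both \<open>m\<close> and \<open>m'\<close> otherwise.\<close>

context
  fixes V :: "'a set" and E :: "'a \<Rightarrow> 'a \<Rightarrow> bool" and f :: "nat \<Rightarrow> 'a + 'a set"
    and l i :: nat and u x :: 'a and m m' :: "'a set"
  assumes g: "graph V E" and meet: "maximal_cliques_meet_in_vertex V E"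
    and f: "induced_cycle_seq (star_vertices V E) (star_adj V E) f l"
    and u: "f (Suc i) = Inl u" and m: "f (i + 2) = Inr m" and m': "f (Suc (i + 2)) = Inr m'"
    and x: "x \<in> m" "x \<in> m'"
begin

private lemmas cycle = induced_cycle_seq_cycle_seq[OF f]

private lemma two_apart:
  "f (k + 2) \<noteq> f k" "\<not> star_adj V E (f k) (f (k + 2))" "\<not> star_adj V E (f (k + 2)) (f k)"
  using cycle_seq_add_neq[OF cycle, of 2 k] induced_cycle_seq_length[OF f]
    induced_cycle_seq_nonadj[OF f, of 2 k] graph_sym[OF graph_star[OF g]] by auto

private lemma maximal_cliques: "maximal_clique V E m" "maximal_clique V E m'"
  using cycle_seq_in_V[OF cycle, of "i + 2"] cycle_seq_in_V[OF cycle, of "Suc (i + 2)"] m m'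
  by simp_all

private lemma point_in_V: "x \<in> V"
  using maximal_clique_subset[OF maximal_cliques(1)] x(1) by blast

private lemmas point_not_on_cycle = star_induced_cycle_seq_point_not_on_cycle[OF g f m m' x]

private lemma vertex_in_clique: "u \<in> m"
  using cycle_seq_edge[OF cycle, of "Suc i"] u m by (simp add: numeral_eq_Suc)

private lemma point_adj_vertex: "star_adj V E (f (Suc i)) (Inl x)"
proof -
  have "u \<noteq> x" using point_not_on_cycle u by (metis rangeI)
  then show ?thesis
    using u maximal_clique_adj[OF maximal_cliques(1) vertex_in_clique x(1)] point_in_V
      maximal_cliques(1) vertex_in_clique by auto
qed

private lemma point_nonadj_before: "\<not> star_adj V E (f i) (Inl x)"
  using star_induced_cycle_seq_nonadj_point[OF g meet f m x(1) point_not_on_cycle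
      two_apart(1)[of i, symmetric] two_apart(2)]
    cycle_seq_edge[OF cycle, of i] u vertex_in_clique by (metis rangeI star_adj.simps(1))

lemma star_induced_cycle_seq_replace_clique_by_point:
  assumes "f (i + 4) = Inr m\<^sub>4"
  shows "\<exists>h. locally_induced_cycle_seq (star_vertices V E) (star_adj V E) h l \<and>
    range h \<subseteq> insert (Inl x) (range f - {f (i + 2)})"
proof -
  have "\<not> star_adj V E (f (i + 2 + 2)) (Inl x)"
    by (rule star_induced_cycle_seq_nonadj_point[OF g meet f m x(1) point_not_on_cycle
          two_apart(1,3)])
      (use assms in \<open>simp add: numeral_eq_Suc\<close>)
  then have after: "\<not> star_adj V E (Inl x) (f (i + 1 + 3))"
    using graph_sym[OF graph_star[OF g], of "Inl x" "f (i + 1 + 3)"] by (auto simp: numeral_eq_Suc)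
  show ?thesis
    using locally_induced_cycle_seq_replace_segment[OF induced_imp_locally_induced_cycle_seq[OF f]
        _ _ _ point_not_on_cycle point_adj_vertex _ point_nonadj_before after]
      induced_cycle_seq_length[OF f] point_in_V x(2) m' maximal_cliques(2) two_apart(2)[of "Suc i"]
    by (auto simp: numeral_eq_Suc)
qed

lemma star_induced_cycle_seq_merge_cliques_into_point:
  assumes w: "f (i + 4) = Inl w"
  shows "\<exists>h. locally_induced_cycle_seq (star_vertices V E) (star_adj V E) h (l - 1) \<and>
    range h \<subseteq> insert (Inl x) (range f - {f (i + 2)})"
proof -
  have "w \<in> m'" using cycle_seq_edge[OF cycle, of "Suc (i + 2)"] m' w by (simp add: numeral_eq_Suc)
  moreover have "x \<noteq> w" using point_not_on_cycle w by (metis rangeI)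
  ultimately have to_w: "star_adj V E (Inl x) (f (i + 2 + 2))"
    using w maximal_clique_adj[OF maximal_cliques(2) x(2)] point_in_V by (simp add: numeral_eq_Suc)
  have "5 \<le> l"
  proof (rule ccontr)
    assume "\<not> 5 \<le> l"
    then have "l = 4" using induced_cycle_seq_length[OF f] by simp
    then have "f (i + 2 + 2) = f i"
      using cycle_seq_periodic[OF cycle, of i] by (simp add: numeral_eq_Suc)
    then show False using point_nonadj_before to_w graph_sym[OF graph_star[OF g]] by metis
  qed
  have "\<not> star_adj V E (f (Suc (i + 2) + 2)) (Inl x)"
  proof (rule star_induced_cycle_seq_nonadj_point[OF g meet f m' x(2) point_not_on_cycle
        two_apart(1,3)])
    fix y assume "f (Suc (i + 2) + 2) = Inl y"
    then have "E w y" using cycle_seq_edge[OF cycle, of "i + 4"] w by (simp add: numeral_eq_Suc)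
    then show "\<exists>z. Inl z \<in> range f \<and> z \<in> m' \<and> E y z"
      using w \<open>w \<in> m'\<close> graph_sym[OF g] by (metis rangeI)
  qed
  then have after: "\<not> star_adj V E (Inl x) (f (i + 2 + 3))"
    using graph_sym[OF graph_star[OF g], of "Inl x" "f (i + 2 + 3)"] by (auto simp: numeral_eq_Suc)
  have "\<not> star_adj V E (f (Suc i)) (f (Suc i + 3))"
    using induced_cycle_seq_nonadj[OF f, of 3 "Suc i"] \<open>5 \<le> l\<close> by simp
  then show ?thesis
    using locally_induced_cycle_seq_replace_segment[OF induced_imp_locally_induced_cycle_seq[OF f]
        _ _ _ point_not_on_cycle point_adj_vertex to_w point_nonadj_before after]
      \<open>5 \<le> l\<close> point_in_V by (auto simp: numeral_eq_Suc)
qed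

end

lemma star_induced_cycle_seq_drop_clique:
  assumes g: "graph V E" and meet: "maximal_cliques_meet_in_vertex V E"
    and f: "induced_cycle_seq (star_vertices V E) (star_adj V E) f l"
    and u: "f (Suc i) = Inl u" and m: "f (i + 2) = Inr m"
  shows "\<exists>h l'. locally_induced_cycle_seq (star_vertices V E) (star_adj V E) h l' \<and> l' \<le> l \<and>
    range h \<inter> range Inr \<subset> range f \<inter> range Inr"
proof -
  obtain m' where m': "f (Suc (i + 2)) = Inr m'"
    using star_induced_cycle_seq_clique_after_vertex[OF f u m] by (auto simp: numeral_eq_Suc)
  obtain x where x: "x \<in> m" "x \<in> m'"
    using cycle_seq_edge[OF induced_cycle_seq_cycle_seq[OF f], of "i + 2"] m m' by auto
  have "\<exists>h l'. locally_induced_cycle_seq (star_vertices V E) (star_adj V E) h l' \<and> l' \<le> l \<and>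
      range h \<subseteq> insert (Inl x) (range f - {Inr m})"
  proof (cases "f (i + 4)")
    case (Inl w)
    then show ?thesis
      using star_induced_cycle_seq_merge_cliques_into_point[OF g meet f u m m' x] m by fastforce
  next
    case (Inr m\<^sub>4)
    then show ?thesis
      using star_induced_cycle_seq_replace_clique_by_point[OF g meet f u m m' x] m by fastforce
  qed
  then obtain h l' where h: "locally_induced_cycle_seq (star_vertices V E) (star_adj V E) h l'"
      "l' \<le> l" and range_h: "range h \<subseteq> insert (Inl x) (range f - {Inr m})" by blast
  have "Inr m \<in> range f \<inter> range Inr" using m by (metis IntI rangeI)
  moreover have "Inr m \<notin> range h" "range h \<inter> range Inr \<subseteq> range f \<inter> range Inr"
    using range_h by auto
  ultimately show ?thesis using h by blast
qed

lemma star_induced_cycle_seq_fewer_cliques: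
  assumes g: "graph V E" and meet: "maximal_cliques_meet_in_vertex V E"
    and f: "induced_cycle_seq (star_vertices V E) (star_adj V E) f l"
    and clique: "range f \<inter> range Inr \<noteq> {}"
  shows "\<exists>h l'. locally_induced_cycle_seq (star_vertices V E) (star_adj V E) h l' \<and> l' \<le> l \<and>
    card (range h \<inter> range Inr) < card (range f \<inter> range Inr)"
proof -
  have c: "cycle_seq (star_vertices V E) (star_adj V E) f l"
    by (rule induced_cycle_seq_cycle_seq[OF f])
  have fin: "finite (range f \<inter> range Inr)" using finite_range_cycle_seq[OF c] by blast
  show ?thesis
  proof (cases "\<forall>k. f k \<in> range Inr")
    case True
    have "f k = Inr (projr (f k))" for k using True[rule_format, of k] by (cases "f k") auto
    then have "\<exists>h. locally_induced_cycle_seq V E h l"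
      by (rule star_induced_cycle_seq_of_cliques[OF g meet f])
    then obtain h where "locally_induced_cycle_seq V E h l" by blast
    then have lifted: "locally_induced_cycle_seq (star_vertices V E) (star_adj V E) (Inl \<circ> h) l"
      by (simp add: locally_induced_cycle_seq_Inl_iff)
    have "range (Inl \<circ> h) \<inter> range Inr = ({} :: ('a + 'a set) set)" by auto
    then have "card (range (Inl \<circ> h) \<inter> range (Inr :: 'a set \<Rightarrow> _)) < card (range f \<inter> range Inr)"
      using clique fin by (simp add: card_gt_0_iff)
    with lifted show ?thesis by blast
  next
    case False
    then obtain p where "f p \<notin> range Inr" by blast
    then have "f p \<in> range Inl" by (cases "f p") auto
    moreover obtain q where "f q \<in> range Inr" using clique by blast
    then have "f q \<notin> range Inl" by auto
    ultimately obtain i where i: "f (Suc i) \<in> range Inl" "f (i + 2) \<notin> range Inl"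
      using cycle_seq_exists_change[OF c, of "\<lambda>v. v \<in> range Inl"] by blast
    then obtain u where u: "f (Suc i) = Inl u" by blast
    obtain m where m: "f (i + 2) = Inr m" using i(2) by (cases "f (i + 2)") auto
    show ?thesis
      using star_induced_cycle_seq_drop_clique[OF g meet f u m] psubset_card_mono[OF fin] by blast
  qed
qed

lemma star_induced_cycle_seq_imp_induced_cycle_seq:
  assumes g: "graph V E" and meet: "maximal_cliques_meet_in_vertex V E"
    and "induced_cycle_seq (star_vertices V E) (star_adj V E) f l"
  shows "\<exists>h l'. induced_cycle_seq V E h l' \<and> l' \<le> l"
  using assms(3)
proof (induction "card (range f \<inter> range Inr)" arbitrary: f l rule: less_induct)
  case less
  show ?case
  proof (cases "range f \<inter> range Inr = {}")
    case True
    define g where "g = projl \<circ> f"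
    have "f k = Inl (g k)" for k using True by (cases "f k") (auto simp: g_def)
    then have "f = Inl \<circ> g" by (simp add: fun_eq_iff)
    then have "induced_cycle_seq V E g l" using less.prems by (simp add: induced_cycle_seq_Inl_iff)
    then show ?thesis by blast
  next
    case False
    then obtain h l' where h: "locally_induced_cycle_seq (star_vertices V E) (star_adj V E) h l'"
        "l' \<le> l" and fewer: "card (range h \<inter> range Inr) < card (range f \<inter> range Inr)"
      using star_induced_cycle_seq_fewer_cliques[OF g meet less.prems] by blast
    obtain h' l'' where h': "induced_cycle_seq (star_vertices V E) (star_adj V E) h' l''" "l'' \<le> l'"
      and "range h' \<subseteq> range h"
      using locally_induced_cycle_seq_contains_induced[OF graph_star[OF g] h(1)] by blast
    then have "card (range h' \<inter> range Inr) \<le> card (range h \<inter> range Inr)"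
      using finite_range_cycle_seq[OF locally_induced_cycle_seq_cycle_seq[OF h(1)]]
      by (intro card_mono) auto
    then obtain h'' l''' where "induced_cycle_seq V E h'' l'''" "l''' \<le> l''"
      using less.hyps[OF _ h'(1)] fewer by fastforce
    then show ?thesis using h(2) h'(2) le_trans by blast
  qed
qed

theorem lemma2p7:
  fixes V :: "'a set" and E :: "'a \<Rightarrow> 'a \<Rightarrow> bool" and k :: enat
  assumes "graph V E"
    and "4 \<le> k"
    and "\<forall>m m'. maximal_clique V E m \<and> maximal_clique V E m' \<and> m \<noteq> m' \<longrightarrow>
           (\<forall>x y. x \<in> m \<inter> m' \<and> y \<in> m \<inter> m' \<longrightarrow> x = y)"
  shows "k_large k (star_vertices V E) (star_adj V E) \<longleftrightarrow> k_large k V E"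
proof -
  have meet: "maximal_cliques_meet_in_vertex V E"
    using assms(3) unfolding maximal_cliques_meet_in_vertex_def .
  have lift: "induced_cycle_seq (star_vertices V E) (star_adj V E) (Inl \<circ> f) l"
    if "induced_cycle_seq V E f l" for f l
    using that by (simp add: induced_cycle_seq_Inl_iff)
  have project: "\<exists>h l'. induced_cycle_seq V E h l' \<and> enat l' < k"
    if cycle: "induced_cycle_seq (star_vertices V E) (star_adj V E) f l" and short: "enat l < k"
    for f l
  proof -
    obtain h l' where "induced_cycle_seq V E h l'" "l' \<le> l"
      using star_induced_cycle_seq_imp_induced_cycle_seq[OF assms(1) meet cycle] by blast
    moreover have "enat l' < k" using \<open>l' \<le> l\<close> short le_less_trans[of "enat l'" "enat l" k] by simp
    ultimately show ?thesis by blast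
  qed
  show ?thesis
    unfolding k_large_iff_no_short_induced_cycle_seq[OF assms(1)]
      k_large_iff_no_short_induced_cycle_seq[OF graph_star[OF assms(1)]]
    using lift project by blast
qed

end
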